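(* In the setting below, consider the moment selection criterion $MSC(S)=J_n(S)-h(|S|)\kappa_n$, where $h$ is strictly increasing, $\lim_{n\to\infty}\kappa_n=\infty$ and $\kappa_n=o(n)$, and let the selected moment set be the minimizer of $MSC(S)$ over $S\in\mathscr{S}$. Then $MSC$ selects the full moment set with probability approaching one.
   Context: Setting: $\theta\in\Theta\subseteq\mathbb{R}^r$; $f=(g',h')'$ a $(p+q)$-vector of moment functions; triangular array $\{Z_{ni}\}$ with $E[g(Z_{ni},\theta_0)]=0$, $E[h(Z_{ni},\theta_0)]=n^{-1/2}\tau$, $\{f(Z_{ni},\theta_0)\}$ uniformly integrable, $Z_{ni}\to_dZ_i$ identically distributed (law $Z$); $f_n(\theta)=n^{-1}\sum_if(Z_{ni},\theta)$. $\mathscr{S}$ is a finite collection of moment sets (subsets of the $p+q$ moment conditions, each with $|S|>r$, where $|S|$ is the number of moment conditions) that contains the full moment set of all $p+q$ conditions. For each $S\in\mathscr{S}$ with zero-one selection matrix $\Xi_S$ and weight $\widetilde{W}_S$, $\widehat{\theta}_S=\arg\min_\theta[\Xi_Sf_n(\theta)]'\widetilde{W}_S[\Xi_Sf_n(\theta)]$, and: $\theta_0$ interior to compact $\Theta$; $\widetilde{W}_S\to_pW_S>0$; $W_S\Xi_SE[f(Z,\theta)]=0$ iff $\theta=\theta_0$; $E[f(Z,\theta)]$ continuous; $\sup_\theta\|f_n(\theta)-E[f(Z,\theta)]\|\to_p0$; $f$ a.s. differentiable near $\theta_0$; $\sup_\theta\|\nabla f_n(\theta)-E[\nabla f(Z,\theta)]\|\to_p0$;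 $\sqrt{n}f_n(\theta_0)\to_dM+(0',\tau')'$ with $M\sim N(0,\Omega)$; $F_S'W_SF_S$ invertible, where $F_S=\Xi_S(E[\nabla_\theta g(Z,\theta_0)]',E[\nabla_\theta h(Z,\theta_0)]')'$. $J_n(S)=n[\Xi_Sf_n(\widehat{\theta}_S)]'\widehat{\Omega}_S^{-1}[\Xi_Sf_n(\widehat{\theta}_S)]$ with $\widehat{\Omega}_S^{-1}$ consistent for $\Omega_S^{-1}$, $\Omega_S=\Xi_S\mathrm{Var}[f(Z,\theta_0)]\Xi_S'$ positive definite. *)

theory Defs
  imports "HOL-Probability.Probability"
begin

text \<open>Outer probability (handles possibly non-measurable events such as those
  involving suprema over the parameter space or argmin estimators).\<close>
definition outer_prob :: "'a measure \<Rightarrow> 'a set \<Rightarrow> real" where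
  "outer_prob M A = Inf (measure M ` {B \<in> sets M. A \<inter> space M \<subseteq> B})"

definition conv_in_prob :: "'a measure \<Rightarrow> (nat \<Rightarrow> 'a \<Rightarrow> 'b::metric_space) \<Rightarrow> 'b \<Rightarrow> bool" where
  "conv_in_prob M X c \<longleftrightarrow>
     (\<forall>e>0. (\<lambda>n. outer_prob M {\<omega> \<in> space M. dist (X n \<omega>) c > e}) \<longlonglongrightarrow> 0)"

definition conv_in_dist :: "'a measure \<Rightarrow> (nat \<Rightarrow> 'a \<Rightarrow> 'b::metric_space) \<Rightarrow> 'b measure \<Rightarrow> bool" where
  "conv_in_dist M X L \<longleftrightarrow>
     (\<forall>\<phi>::'b \<Rightarrow> real. continuous_on UNIV \<phi> \<and> bounded (range \<phi>) \<longrightarrow>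
        (\<lambda>n. \<integral>\<omega>. \<phi> (X n \<omega>) \<partial>M) \<longlonglongrightarrow> (\<integral>x. \<phi> x \<partial>L))"

definition gaussian_vec :: "(real^'m) measure \<Rightarrow> real^'m \<Rightarrow> ('m \<Rightarrow> 'm \<Rightarrow> real) \<Rightarrow> bool" where
  "gaussian_vec L mu Sig \<longleftrightarrow> prob_space L \<and> sets L = sets borel \<and>
     (\<forall>t::real^'m. (\<integral>x. cis (t \<bullet> x) \<partial>L) =
        cis (t \<bullet> mu) * complex_of_real (exp (- (\<Sum>i\<in>UNIV. \<Sum>j\<in>UNIV. t$i * Sig i j * t$j) / 2)))"

definition unif_integrable :: "'a measure \<Rightarrow> ('i \<Rightarrow> 'a \<Rightarrow> 'b::{banach,second_countable_topology}) \<Rightarrow> 'i set \<Rightarrow> bool" where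
  "unif_integrable M X I \<longleftrightarrow> (\<forall>k\<in>I. integrable M (X k)) \<and>
     (\<forall>e>0. \<exists>c. \<forall>k\<in>I. (\<integral>\<omega>. (if norm (X k \<omega>) > c then norm (X k \<omega>) else 0) \<partial>M) \<le> e)"

definition pos_def_on :: "'m set \<Rightarrow> ('m \<Rightarrow> 'm \<Rightarrow> real) \<Rightarrow> bool" where
  "pos_def_on S A \<longleftrightarrow> (\<forall>i\<in>S. \<forall>j\<in>S. A i j = A j i) \<and>
     (\<forall>v. (\<exists>i\<in>S. v i \<noteq> 0) \<longrightarrow> (\<Sum>i\<in>S. \<Sum>j\<in>S. v i * A i j * v j) > 0)"

definition sample_mom :: "(nat \<Rightarrow> nat \<Rightarrow> 'a \<Rightarrow> 'z) \<Rightarrow> ('z \<Rightarrow> 'p \<Rightarrow> 'v::real_vector) \<Rightarrow> nat \<Rightarrow> 'a \<Rightarrow> 'p \<Rightarrow> 'v" where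
  "sample_mom Z f n \<omega> \<theta> = (1 / real n) *\<^sub>R (\<Sum>i<n. f (Z n i \<omega>) \<theta>)"

text \<open>Quadratic form [Xi_S v]' A [Xi_S v] for the moment subset S.\<close>
definition quad_on :: "'m set \<Rightarrow> real^'m \<Rightarrow> ('m \<Rightarrow> 'm \<Rightarrow> real) \<Rightarrow> real" where
  "quad_on S v A = (\<Sum>i\<in>S. \<Sum>j\<in>S. v $ i * A i j * v $ j)"

definition cov_mat :: "'z measure \<Rightarrow> ('z \<Rightarrow> real^'m) \<Rightarrow> 'm \<Rightarrow> 'm \<Rightarrow> real" where
  "cov_mat P X i j = (\<integral>z. (X z $ i - (\<integral>y. X y \<partial>P) $ i) * (X z $ j - (\<integral>y. X y \<partial>P) $ j) \<partial>P)"

end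

theory Submission
  imports Defs
begin

text \<open>Under local misspecification every statistic \<open>J\<^sub>n(S)\<close> is bounded in probability.
  Since \<open>\<theta>\<^sub>S\<close> minimises the \<open>W\<^sub>S\<close>-weighted criterion, \<open>\<theta>\<^sub>0\<close> does no better,
  and the weights converge to a positive definite limit, \<open>n |\<Xi>\<^sub>S f\<^sub>n(\<theta>\<^sub>S)|\<^sup>2\<close> is
  dominated by a constant times \<open>n |f\<^sub>n(\<theta>\<^sub>0)|\<^sup>2\<close>, which is tight because
  \<open>\<surd>n f\<^sub>n(\<theta>\<^sub>0)\<close> converges in distribution. The full moment set carries the strictly
  largest penalty \<open>h(|S|)\<close>, so the criterion can prefer a smaller set only if some
  \<open>|J\<^sub>n(S)|\<close> exceeds a fixed multiple of \<open>\<kappa>\<^sub>n \<rightarrow> \<infinity>\<close>, an event of vanishing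
  probability.\<close>

lemma outer_prob_le_measure:
  assumes "B \<in> sets M" "A \<inter> space M \<subseteq> B"
  shows "outer_prob M A \<le> measure M B"
  unfolding outer_prob_def
  by (rule cInf_lower) (use assms in \<open>auto intro: bdd_belowI[where m=0]\<close>)

lemma outer_prob_nonneg: "outer_prob M A \<ge> 0"
  unfolding outer_prob_def
  by (rule cInf_greatest) auto

lemma outer_prob_mono:
  assumes "A \<subseteq> A'"
  shows "outer_prob M A \<le> outer_prob M A'"
  unfolding outer_prob_def
  by (rule cInf_superset_mono) (use assms in \<open>auto intro: bdd_belowI[where m=0]\<close>)

lemma outer_prob_approx:
  assumes "e > 0"
  obtains B where "B \<in> sets M" "A \<inter> space M \<subseteq> B" "measure M B < outer_prob M A + e"
proof -
  have ne: "measure M ` {B \<in> sets M. A \<inter> space M \<subseteq> B} \<noteq> {}" by auto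
  have "Inf (measure M ` {B \<in> sets M. A \<inter> space M \<subseteq> B}) < outer_prob M A + e"
    using assms unfolding outer_prob_def by simp
  from cInf_lessD[OF ne this] show ?thesis using that by blast
qed

lemma outer_prob_Un:
  assumes "finite_measure M"
  shows "outer_prob M (A \<union> A') \<le> outer_prob M A + outer_prob M A'"
proof (rule field_le_epsilon)
  fix e :: real assume "e > 0"
  then obtain B B' where B: "B \<in> sets M" "A \<inter> space M \<subseteq> B" "measure M B < outer_prob M A + e/2"
    and B': "B' \<in> sets M" "A' \<inter> space M \<subseteq> B'" "measure M B' < outer_prob M A' + e/2"
    using outer_prob_approx[of "e/2"] by (metis half_gt_zero)
  have "outer_prob M (A \<union> A') \<le> measure M (B \<union> B')"
    using B B' by (intro outer_prob_le_measure) auto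
  also have "\<dots> \<le> measure M B + measure M B'"
    using B B' assms by (intro measure_subadditive) (auto simp: finite_measure.emeasure_finite)
  finally show "outer_prob M (A \<union> A') \<le> outer_prob M A + outer_prob M A' + e"
    using B B' by linarith
qed

lemma outer_prob_UN_le_sum:
  assumes "finite_measure M" "finite I"
  shows "outer_prob M (\<Union>i\<in>I. A i) \<le> (\<Sum>i\<in>I. outer_prob M (A i))"
  using assms(2)
proof (induction I rule: finite_induct)
  case empty
  have "outer_prob M {} \<le> measure M {}" by (rule outer_prob_le_measure) auto
  then show ?case by simp
next
  case (insert x F)
  have "outer_prob M (\<Union>i\<in>insert x F. A i) \<le> outer_prob M (A x) + outer_prob M (\<Union>i\<in>F. A i)"
    using outer_prob_Un[OF assms(1)] by simp
  with insert show ?case by simp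
qed

lemma tendsto_outer_prob_UN:
  assumes "finite_measure M" "finite I" "\<And>i. i \<in> I \<Longrightarrow> (\<lambda>n. outer_prob M (A i n)) \<longlonglongrightarrow> 0"
  shows "(\<lambda>n. outer_prob M (\<Union>i\<in>I. A i n)) \<longlonglongrightarrow> 0"
proof (rule tendsto_sandwich[where f="\<lambda>_. 0" and h="\<lambda>n. \<Sum>i\<in>I. outer_prob M (A i n)"])
  show "(\<lambda>n. \<Sum>i\<in>I. outer_prob M (A i n)) \<longlonglongrightarrow> 0"
    by (rule tendsto_null_sum) (rule assms(3))
qed (simp_all add: outer_prob_nonneg outer_prob_UN_le_sum[OF assms(1,2)])

lemma outer_prob_tendsto_0_subset:
  assumes "(\<lambda>n. outer_prob M (B n)) \<longlonglongrightarrow> 0" "eventually (\<lambda>n. A n \<subseteq> B n) sequentially"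
  shows "(\<lambda>n. outer_prob M (A n)) \<longlonglongrightarrow> 0"
proof (rule tendsto_sandwich[OF _ _ tendsto_const assms(1)])
  show "eventually (\<lambda>n. outer_prob M (A n) \<le> outer_prob M (B n)) sequentially"
    using assms(2) by eventually_elim (rule outer_prob_mono)
qed (simp add: outer_prob_nonneg)

definition bounded_in_prob :: "'a measure \<Rightarrow> (nat \<Rightarrow> 'a \<Rightarrow> 'b::real_normed_vector) \<Rightarrow> bool" where
  "bounded_in_prob M X \<longleftrightarrow>
     (\<forall>e>0. \<exists>R. eventually (\<lambda>n. outer_prob M {\<omega> \<in> space M. norm (X n \<omega>) > R} \<le> e) sequentially)"

lemma bounded_in_prob_exceed_tendsto_0:
  assumes X: "bounded_in_prob M X" and c: "filterlim c at_top sequentially"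
  shows "(\<lambda>n. outer_prob M {\<omega> \<in> space M. norm (X n \<omega>) \<ge> c n}) \<longlonglongrightarrow> 0"
proof (rule order_tendstoI)
  fix y :: real assume "y > 0"
  then obtain R where R: "eventually (\<lambda>n. outer_prob M {\<omega> \<in> space M. norm (X n \<omega>) > R} \<le> y/2) sequentially"
    using X half_gt_zero unfolding bounded_in_prob_def by blast
  moreover have "eventually (\<lambda>n. c n > R) sequentially"
    using c by (simp add: filterlim_at_top_dense)
  ultimately show "eventually (\<lambda>n. outer_prob M {\<omega> \<in> space M. norm (X n \<omega>) \<ge> c n} < y) sequentially"
  proof eventually_elim
    case (elim n)
    have "outer_prob M {\<omega> \<in> space M. norm (X n \<omega>) \<ge> c n} \<le> outer_prob M {\<omega> \<in> space M. norm (X n \<omega>) > R}"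
      using elim(2) by (intro outer_prob_mono) auto
    with elim(1) \<open>y > 0\<close> show ?case by linarith
  qed
next
  fix y :: real assume "y < 0"
  then show "eventually (\<lambda>n. y < outer_prob M {\<omega> \<in> space M. norm (X n \<omega>) \<ge> c n}) sequentially"
    using outer_prob_nonneg by (intro always_eventually allI) (rule less_le_trans)
qed

lemma integral_cutoff_tendsto_0:
  fixes L :: "'b::real_normed_vector measure"
  assumes "prob_space L" "sets L = sets borel"
  shows "(\<lambda>k. \<integral>x. min 1 (max 0 (norm x - real k)) \<partial>L) \<longlonglongrightarrow> 0"
proof -
  have "(\<lambda>k. \<integral>x. min 1 (max 0 (norm x - real k)) \<partial>L) \<longlonglongrightarrow> (\<integral>x. 0 \<partial>L)"
  proof (rule integral_dominated_convergence[where w="\<lambda>_. 1"])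
    show "(\<lambda>x. min 1 (max 0 (norm x - real k))) \<in> borel_measurable L" for k
      by (subst measurable_cong_sets[OF assms(2) refl])
        (intro borel_measurable_continuous_onI continuous_intros)
    show "integrable L (\<lambda>_. 1::real)"
      using assms(1) by (simp add: prob_space_def finite_measure.integrable_const)
    show "AE x in L. (\<lambda>k. min 1 (max 0 (norm x - real k))) \<longlonglongrightarrow> 0"
    proof (rule AE_I2)
      fix x :: 'b
      obtain N :: nat where "norm x < real N" using reals_Archimedean2 by blast
      then have "eventually (\<lambda>k. min 1 (max 0 (norm x - real k)) = 0) sequentially"
        unfolding eventually_sequentially by (intro exI[of _ N]) auto
      then show "(\<lambda>k. min 1 (max 0 (norm x - real k))) \<longlonglongrightarrow> 0" by (rule tendsto_eventually)
    qed
  qed auto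
  then show ?thesis by simp
qed

lemma measure_norm_gt_le_integral_cutoff:
  fixes Y :: "'a \<Rightarrow> 'b::real_normed_vector"
  assumes M: "prob_space M" and Y: "Y \<in> borel_measurable M"
  shows "measure M {\<omega> \<in> space M. norm (Y \<omega>) > R + 1} \<le> (\<integral>\<omega>. min 1 (max 0 (norm (Y \<omega>) - R)) \<partial>M)"
proof -
  let ?A = "{\<omega> \<in> space M. norm (Y \<omega>) > R + 1}"
  have A: "?A \<in> sets M" using Y by measurable
  have "measure M ?A = (\<integral>\<omega>. indicator ?A \<omega> \<partial>M)"
    using A by simp
  also have "\<dots> \<le> (\<integral>\<omega>. min 1 (max 0 (norm (Y \<omega>) - R)) \<partial>M)"
  proof (rule integral_mono)
    show "integrable M (indicator ?A :: 'a \<Rightarrow> real)"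
      using A M by (intro finite_measure.integrable_const_bound[where B=1]) (auto simp: prob_space_def)
    show "integrable M (\<lambda>\<omega>. min 1 (max 0 (norm (Y \<omega>) - R)))"
      using Y M by (intro finite_measure.integrable_const_bound[where B=1]) (auto simp: prob_space_def)
  qed (auto simp: indicator_def)
  finally show ?thesis .
qed

lemma conv_in_dist_bounded_in_prob:
  fixes X :: "nat \<Rightarrow> 'a \<Rightarrow> 'b::real_normed_vector"
  assumes M: "prob_space M" and L: "prob_space L" "sets L = sets borel"
    and X: "\<And>n. X n \<in> borel_measurable M" and XL: "conv_in_dist M X L"
  shows "bounded_in_prob M X"
  unfolding bounded_in_prob_def
proof (intro allI impI)
  fix e :: real assume "e > 0"
  obtain k :: nat where k: "(\<integral>x. min 1 (max 0 (norm x - real k)) \<partial>L) < e"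
    using order_tendstoD(2)[OF integral_cutoff_tendsto_0[OF L] \<open>e > 0\<close>]
    by (auto simp: eventually_sequentially)
  have "(\<lambda>n. \<integral>\<omega>. min 1 (max 0 (norm (X n \<omega>) - real k)) \<partial>M) \<longlonglongrightarrow> (\<integral>x. min 1 (max 0 (norm x - real k)) \<partial>L)"
    using XL unfolding conv_in_dist_def
    by (elim allE impE) (auto intro!: continuous_intros simp: bounded_iff intro: exI[of _ 1])
  from order_tendstoD(2)[OF this k]
  have "eventually (\<lambda>n. outer_prob M {\<omega> \<in> space M. norm (X n \<omega>) > real k + 1} \<le> e) sequentially"
  proof eventually_elim
    case (elim n)
    have "{\<omega> \<in> space M. norm (X n \<omega>) > real k + 1} \<in> sets M" using X by measurable
    then have "outer_prob M {\<omega> \<in> space M. norm (X n \<omega>) > real k + 1}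
        \<le> measure M {\<omega> \<in> space M. norm (X n \<omega>) > real k + 1}"
      by (intro outer_prob_le_measure) auto
    also have "\<dots> \<le> e"
      using measure_norm_gt_le_integral_cutoff[OF M X[of n], where R="real k"] elim by linarith
    finally show ?case .
  qed
  then show "\<exists>R. eventually (\<lambda>n. outer_prob M {\<omega> \<in> space M. norm (X n \<omega>) > R} \<le> e) sequentially"
    by blast
qed

definition vec_restrict :: "'m set \<Rightarrow> real^'m \<Rightarrow> real^'m" where
  "vec_restrict S v = (\<chi> i. if i \<in> S then v $ i else 0)"

lemma vec_restrict_nth [simp]: "vec_restrict S v $ i = (if i \<in> S then v $ i else 0)"
  by (simp add: vec_restrict_def)

lemma quad_on_vec_restrict [simp]: "quad_on S (vec_restrict S v) A = quad_on S v A"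
  unfolding quad_on_def by (intro sum.cong) auto

lemma norm_vec_restrict_le: "norm (vec_restrict S v) \<le> norm v"
  by (rule norm_le_componentwise_cart) auto

lemma quad_on_scaleR: "quad_on S (c *\<^sub>R v) A = c\<^sup>2 * quad_on S v A"
  unfolding quad_on_def power2_eq_square by (simp add: sum_distrib_left algebra_simps)

lemma quad_on_diff: "quad_on S v A - quad_on S v B = quad_on S v (\<lambda>i j. A i j - B i j)"
  unfolding quad_on_def by (simp add: sum_subtractf[symmetric] algebra_simps)

lemma continuous_on_quad_on: "continuous_on A (\<lambda>x. quad_on S x W)"
  unfolding quad_on_def by (intro continuous_intros)

lemma abs_quad_on_le:
  assumes "finite S"
  shows "\<bar>quad_on S v A\<bar> \<le> (\<Sum>i\<in>S. \<Sum>j\<in>S. \<bar>A i j\<bar>) * (norm (vec_restrict S v))\<^sup>2"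
proof -
  have "\<bar>quad_on S v A\<bar> \<le> (\<Sum>i\<in>S. \<Sum>j\<in>S. \<bar>v$i * A i j * v$j\<bar>)"
    unfolding quad_on_def by (rule order.trans[OF sum_abs sum_mono]) (rule sum_abs)
  also have "\<dots> \<le> (\<Sum>i\<in>S. \<Sum>j\<in>S. \<bar>A i j\<bar> * (norm (vec_restrict S v))\<^sup>2)"
  proof (intro sum_mono)
    have comp: "\<bar>v$k\<bar> \<le> norm (vec_restrict S v)" if "k \<in> S" for k
      using component_le_norm_cart[of "vec_restrict S v" k] that by simp
    fix i j assume "i \<in> S" "j \<in> S"
    then have "\<bar>v$i\<bar> * \<bar>v$j\<bar> \<le> norm (vec_restrict S v) * norm (vec_restrict S v)"
      by (intro mult_mono comp) auto
    then have "\<bar>A i j\<bar> * (\<bar>v$i\<bar> * \<bar>v$j\<bar>) \<le> \<bar>A i j\<bar> * (norm (vec_restrict S v))\<^sup>2"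
      unfolding power2_eq_square by (rule mult_left_mono) simp
    then show "\<bar>v$i * A i j * v$j\<bar> \<le> \<bar>A i j\<bar> * (norm (vec_restrict S v))\<^sup>2"
      by (simp add: abs_mult mult_ac)
  qed
  also have "\<dots> = (\<Sum>i\<in>S. \<Sum>j\<in>S. \<bar>A i j\<bar>) * (norm (vec_restrict S v))\<^sup>2"
    by (simp add: sum_distrib_right)
  finally show ?thesis .
qed

lemma pos_def_on_coercive:
  fixes W :: "'m::finite \<Rightarrow> 'm \<Rightarrow> real"
  assumes pd: "pos_def_on S W"
  obtains l where "l > 0" "\<And>v. l * (norm (vec_restrict S v))\<^sup>2 \<le> quad_on S v W"
proof (cases "S = {}")
  case True
  then have "vec_restrict S v = 0" for v by (simp add: vec_eq_iff)
  with True show ?thesis using that[of 1] by (simp add: quad_on_def)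
next
  case False
  then obtain i0 where "i0 \<in> S" by blast
  define K where "K = sphere (0::real^'m) 1 \<inter> (\<Inter>i\<in>-S. {x. x $ i = 0})"
  have "compact K"
    unfolding K_def
    by (intro compact_Int_closed compact_sphere closed_INT ballI closed_Collect_eq
        continuous_on_component continuous_on_id continuous_on_const)
  moreover have "K \<noteq> {}"
  proof -
    have "axis i0 (1::real) $ i = 0" if "i \<notin> S" for i
      using that \<open>i0 \<in> S\<close> by (auto simp: axis_def)
    then have "axis i0 1 \<in> K" unfolding K_def by simp
    then show ?thesis by blast
  qed
  moreover have "continuous_on K (\<lambda>x. quad_on S x W)"
    by (rule continuous_on_quad_on)
  ultimately obtain x where x: "x \<in> K" "\<forall>y\<in>K. quad_on S x W \<le> quad_on S y W"
    by (metis continuous_attains_inf)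
  have "\<exists>i\<in>S. x $ i \<noteq> 0"
  proof (rule ccontr)
    assume "\<not> (\<exists>i\<in>S. x $ i \<noteq> 0)"
    moreover have "x $ i = 0" if "i \<notin> S" for i
      using x(1) that unfolding K_def by blast
    ultimately have "x = 0" by (auto simp: vec_eq_iff)
    with x(1) show False unfolding K_def by simp
  qed
  then have l: "quad_on S x W > 0"
    using pd unfolding pos_def_on_def quad_on_def by auto
  have "quad_on S x W * (norm (vec_restrict S v))\<^sup>2 \<le> quad_on S v W" for v
  proof (cases "vec_restrict S v = 0")
    case True
    then show ?thesis using quad_on_vec_restrict[of S v W] by (simp add: quad_on_def)
  next
    case False
    define p where "p = vec_restrict S v"
    have "p \<noteq> 0" using False p_def by simp
    have "(1 / norm p) *\<^sub>R p \<in> K"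
      using \<open>p \<noteq> 0\<close> unfolding K_def p_def by simp
    then have "quad_on S x W \<le> quad_on S ((1 / norm p) *\<^sub>R p) W"
      using x(2) by blast
    also have "\<dots> = quad_on S v W / (norm p)\<^sup>2"
      unfolding quad_on_scaleR p_def by (simp add: power_divide)
    finally show ?thesis using \<open>p \<noteq> 0\<close> by (simp add: p_def pos_le_divide_eq)
  qed
  with l show ?thesis using that by blast
qed

lemma conv_in_prob_sum_abs_dev:
  fixes A :: "nat \<Rightarrow> 'a \<Rightarrow> 'm \<Rightarrow> 'm \<Rightarrow> real"
  assumes M: "finite_measure M" and S: "finite S" and "\<delta> > 0"
    and conv: "\<forall>i\<in>S. \<forall>j\<in>S. conv_in_prob M (\<lambda>n \<omega>. A n \<omega> i j) (B i j)"
  shows "(\<lambda>n. outer_prob M {\<omega> \<in> space M. (\<Sum>i\<in>S. \<Sum>j\<in>S. \<bar>A n \<omega> i j - B i j\<bar>) > \<delta>}) \<longlonglongrightarrow> 0"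
proof (rule outer_prob_tendsto_0_subset)
  define \<eta> where "\<eta> = \<delta> / (real (card S) ^ 2 + 1)"
  have den: "real (card S) ^ 2 + 1 > 0" by (intro add_nonneg_pos) auto
  with \<open>\<delta> > 0\<close> have "\<eta> > 0" unfolding \<eta>_def by simp
  show "(\<lambda>n. outer_prob M (\<Union>p\<in>S \<times> S. {\<omega> \<in> space M. dist (A n \<omega> (fst p) (snd p)) (B (fst p) (snd p)) > \<eta>})) \<longlonglongrightarrow> 0"
    using conv \<open>\<eta> > 0\<close> S by (intro tendsto_outer_prob_UN M) (auto simp: conv_in_prob_def)
  have "real (card S) ^ 2 * \<eta> < (real (card S) ^ 2 + 1) * \<eta>"
    using \<open>\<eta> > 0\<close> by simp
  also have "\<dots> = \<delta>" using den by (simp add: \<eta>_def)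
  finally have "real (card S) ^ 2 * \<eta> < \<delta>" .
  then have "(\<Sum>i\<in>S. \<Sum>j\<in>S. \<bar>A n \<omega> i j - B i j\<bar>) < \<delta>"
    if "\<forall>i\<in>S. \<forall>j\<in>S. \<bar>A n \<omega> i j - B i j\<bar> \<le> \<eta>" for n \<omega>
    using sum_mono[of S "\<lambda>i. \<Sum>j\<in>S. \<bar>A n \<omega> i j - B i j\<bar>" "\<lambda>i. real (card S) * \<eta>"]
      sum_bounded_above[of S "\<lambda>j. \<bar>A n \<omega> _ j - B _ j\<bar>" \<eta>] that
    by (simp add: power2_eq_square mult.assoc)
  then show "eventually (\<lambda>n. {\<omega> \<in> space M. (\<Sum>i\<in>S. \<Sum>j\<in>S. \<bar>A n \<omega> i j - B i j\<bar>) > \<delta>}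
      \<subseteq> (\<Union>p\<in>S \<times> S. {\<omega> \<in> space M. dist (A n \<omega> (fst p) (snd p)) (B (fst p) (snd p)) > \<eta>})) sequentially"
    by (intro always_eventually allI subsetI) (force simp: dist_real_def not_less)
qed

lemma quad_on_minimizer_bound:
  assumes S: "finite S" and l: "l > 0" "\<And>v. l * (norm (vec_restrict S v))\<^sup>2 \<le> quad_on S v W"
    and dW: "(\<Sum>i\<in>S. \<Sum>j\<in>S. \<bar>Wt i j - W i j\<bar>) \<le> l / 2"
    and dO: "(\<Sum>i\<in>S. \<Sum>j\<in>S. \<bar>Oh i j - Oi i j\<bar>) \<le> 1"
    and min: "quad_on S u_min Wt \<le> quad_on S u Wt"
  shows "\<bar>quad_on S u_min Oh\<bar>
    \<le> ((\<Sum>i\<in>S. \<Sum>j\<in>S. \<bar>Oi i j\<bar>) + 1) * (2 * (\<Sum>i\<in>S. \<Sum>j\<in>S. \<bar>W i j\<bar>) + l) / l * (norm u)\<^sup>2"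
proof -
  let ?KW = "\<Sum>i\<in>S. \<Sum>j\<in>S. \<bar>W i j\<bar>" and ?KO = "\<Sum>i\<in>S. \<Sum>j\<in>S. \<bar>Oi i j\<bar>"
  let ?r0 = "(norm (vec_restrict S u))\<^sup>2" and ?r1 = "(norm (vec_restrict S u_min))\<^sup>2"
  have dev: "\<bar>quad_on S u Wt - quad_on S u W\<bar> \<le> l / 2 * (norm (vec_restrict S u))\<^sup>2" for u
    unfolding quad_on_diff
    by (rule order.trans[OF abs_quad_on_le[OF S] mult_right_mono[OF dW]]) simp
  have "l / 2 * ?r1 \<le> quad_on S u_min Wt"
    using dev[of u_min] l(2)[of u_min] by linarith
  also have "\<dots> \<le> quad_on S u Wt" by (rule min)
  also have "\<dots> \<le> (?KW + l / 2) * ?r0"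
    using dev[of u] abs_quad_on_le[OF S, of u W] unfolding distrib_right abs_le_iff by linarith
  finally have r1: "?r1 \<le> (2 * ?KW + l) / l * ?r0"
    using l(1) by (simp add: field_simps)
  have "(\<Sum>i\<in>S. \<Sum>j\<in>S. \<bar>Oh i j\<bar>) \<le> (\<Sum>i\<in>S. \<Sum>j\<in>S. \<bar>Oi i j\<bar> + \<bar>Oh i j - Oi i j\<bar>)"
    by (intro sum_mono) auto
  with dO have KO: "(\<Sum>i\<in>S. \<Sum>j\<in>S. \<bar>Oh i j\<bar>) \<le> ?KO + 1"
    by (simp add: sum.distrib)
  have "\<bar>quad_on S u_min Oh\<bar> \<le> (\<Sum>i\<in>S. \<Sum>j\<in>S. \<bar>Oh i j\<bar>) * ?r1"
    by (rule abs_quad_on_le[OF S])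
  also have "\<dots> \<le> (?KO + 1) * ((2 * ?KW + l) / l * ?r0)"
    using KO r1 by (intro mult_mono) (auto intro!: sum_nonneg add_nonneg_nonneg)
  also have "\<dots> \<le> (?KO + 1) * ((2 * ?KW + l) / l * (norm u)\<^sup>2)"
    using l(1) norm_vec_restrict_le[of S u]
    by (intro mult_left_mono power_mono) (auto intro!: sum_nonneg add_nonneg_nonneg divide_nonneg_pos)
  finally show ?thesis by simp
qed

text \<open>With \<open>u n = f\<^sub>n(\<theta>\<^sub>0)\<close> and \<open>u_min n = f\<^sub>n(\<theta>\<^sub>S)\<close> the conclusion is \<open>J\<^sub>n(S) = O\<^sub>p(1)\<close>.\<close>

lemma bounded_in_prob_scaled_quad_on_minimizer:
  fixes S :: "'m::finite set" and u u_min :: "nat \<Rightarrow> 'a \<Rightarrow> real^'m"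
    and Wt Oh :: "nat \<Rightarrow> 'a \<Rightarrow> 'm \<Rightarrow> 'm \<Rightarrow> real"
  assumes M: "prob_space M" and pd: "pos_def_on S W"
    and min: "\<And>n \<omega>. \<omega> \<in> space M \<Longrightarrow> quad_on S (u_min n \<omega>) (Wt n \<omega>) \<le> quad_on S (u n \<omega>) (Wt n \<omega>)"
    and u: "bounded_in_prob M (\<lambda>n \<omega>. sqrt (real n) *\<^sub>R u n \<omega>)"
    and Wt: "\<forall>i\<in>S. \<forall>j\<in>S. conv_in_prob M (\<lambda>n \<omega>. Wt n \<omega> i j) (W i j)"
    and Oh: "\<forall>i\<in>S. \<forall>j\<in>S. conv_in_prob M (\<lambda>n \<omega>. Oh n \<omega> i j) (Oi i j)"
  shows "bounded_in_prob M (\<lambda>n \<omega>. real n * quad_on S (u_min n \<omega>) (Oh n \<omega>))"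
  unfolding bounded_in_prob_def
proof (intro allI impI)
  fix e :: real assume "e > 0"
  have fin: "finite_measure M" using M by (simp add: prob_space_def)
  obtain l where l: "l > 0" "\<And>v. l * (norm (vec_restrict S v))\<^sup>2 \<le> quad_on S v W"
    using pos_def_on_coercive[OF pd] by blast
  define C where "C = ((\<Sum>i\<in>S. \<Sum>j\<in>S. \<bar>Oi i j\<bar>) + 1) * (2 * (\<Sum>i\<in>S. \<Sum>j\<in>S. \<bar>W i j\<bar>) + l) / l"
  have "C \<ge> 0" unfolding C_def using l(1)
    by (auto intro!: divide_nonneg_pos mult_nonneg_nonneg add_nonneg_nonneg sum_nonneg)
  define BW where "BW n = {\<omega> \<in> space M. (\<Sum>i\<in>S. \<Sum>j\<in>S. \<bar>Wt n \<omega> i j - W i j\<bar>) > l / 2}" for n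
  define BO where "BO n = {\<omega> \<in> space M. (\<Sum>i\<in>S. \<Sum>j\<in>S. \<bar>Oh n \<omega> i j - Oi i j\<bar>) > 1}" for n
  define BX where "BX R n = {\<omega> \<in> space M. norm (sqrt (real n) *\<^sub>R u n \<omega>) > R}" for R n
  obtain R where R: "eventually (\<lambda>n. outer_prob M (BX R n) \<le> e / 2) sequentially"
    using u \<open>e > 0\<close> half_gt_zero unfolding bounded_in_prob_def BX_def by blast
  have "(\<lambda>n. outer_prob M (BW n) + outer_prob M (BO n)) \<longlonglongrightarrow> 0 + 0"
    unfolding BW_def BO_def using l(1)
    by (intro tendsto_add conv_in_prob_sum_abs_dev[OF fin] Wt Oh) auto
  then have "eventually (\<lambda>n. outer_prob M (BW n) + outer_prob M (BO n) < e / 2) sequentially"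
    using \<open>e > 0\<close> by (intro order_tendstoD(2)) auto
  with R have "eventually (\<lambda>n. outer_prob M
      {\<omega> \<in> space M. norm (real n * quad_on S (u_min n \<omega>) (Oh n \<omega>)) > C * R\<^sup>2} \<le> e) sequentially"
  proof eventually_elim
    case (elim n)
    have "norm (real n * quad_on S (u_min n \<omega>) (Oh n \<omega>)) \<le> C * R\<^sup>2"
      if \<omega>: "\<omega> \<in> space M" "\<omega> \<notin> BW n" "\<omega> \<notin> BO n" "\<omega> \<notin> BX R n" for \<omega>
    proof -
      have "\<bar>quad_on S (u_min n \<omega>) (Oh n \<omega>)\<bar> \<le> C * (norm (u n \<omega>))\<^sup>2"
        using quad_on_minimizer_bound[OF _ l _ _ min] \<omega> unfolding C_def BW_def BO_def by auto
      then have "real n * \<bar>quad_on S (u_min n \<omega>) (Oh n \<omega>)\<bar> \<le> real n * (C * (norm (u n \<omega>))\<^sup>2)"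
        by (rule mult_left_mono) simp
      then have "norm (real n * quad_on S (u_min n \<omega>) (Oh n \<omega>)) \<le> C * (norm (sqrt (real n) *\<^sub>R u n \<omega>))\<^sup>2"
        by (simp add: abs_mult power_mult_distrib mult_ac)
      also have "\<dots> \<le> C * R\<^sup>2"
        using \<omega>(1,4) \<open>C \<ge> 0\<close> unfolding BX_def by (intro mult_left_mono power_mono) auto
      finally show ?thesis .
    qed
    then have "{\<omega> \<in> space M. norm (real n * quad_on S (u_min n \<omega>) (Oh n \<omega>)) > C * R\<^sup>2}
        \<subseteq> (BW n \<union> BO n) \<union> BX R n"
      by force
    then have "outer_prob M {\<omega> \<in> space M. norm (real n * quad_on S (u_min n \<omega>) (Oh n \<omega>)) > C * R\<^sup>2}
        \<le> outer_prob M (BW n) + outer_prob M (BO n) + outer_prob M (BX R n)"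
      by (meson order.trans add_right_mono outer_prob_mono outer_prob_Un[OF fin])
    with elim show ?case by linarith
  qed
  then show "\<exists>R. eventually (\<lambda>n. outer_prob M
      {\<omega> \<in> space M. norm (real n * quad_on S (u_min n \<omega>) (Oh n \<omega>)) > R} \<le> e) sequentially"
    by blast
qed

lemma penalized_selection_consistent:
  fixes J :: "'s \<Rightarrow> nat \<Rightarrow> 'a \<Rightarrow> real" and pen :: "'s \<Rightarrow> real" and kappa :: "nat \<Rightarrow> real"
  assumes M: "finite_measure M" and SS: "finite SS" "full \<in> SS"
    and J: "\<And>S. S \<in> SS \<Longrightarrow> bounded_in_prob M (J S)"
    and pen: "\<And>S. S \<in> SS \<Longrightarrow> S \<noteq> full \<Longrightarrow> pen S < pen full"
    and kappa: "filterlim kappa at_top sequentially"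
  shows "(\<lambda>n. outer_prob M {\<omega> \<in> space M. \<not> (\<forall>S\<in>SS. S \<noteq> full \<longrightarrow>
            J full n \<omega> - pen full * kappa n < J S n \<omega> - pen S * kappa n)}) \<longlonglongrightarrow> 0"
proof (rule outer_prob_tendsto_0_subset)
  let ?c = "\<lambda>S n. (pen full - pen S) / 2 * kappa n"
  let ?E = "\<lambda>S n. \<Union>T\<in>{full, S}. {\<omega> \<in> space M. norm (J T n \<omega>) \<ge> ?c S n}"
  have E: "(\<lambda>n. outer_prob M (?E S n)) \<longlonglongrightarrow> 0" if S: "S \<in> SS - {full}" for S
  proof -
    have "filterlim (?c S) at_top sequentially"
      using S pen by (intro filterlim_tendsto_pos_mult_at_top[OF tendsto_const _ kappa]) auto
    then show ?thesis
      using S SS(2) by (intro tendsto_outer_prob_UN[OF M] bounded_in_prob_exceed_tendsto_0 J) auto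
  qed
  show "(\<lambda>n. outer_prob M (\<Union>S\<in>SS - {full}. ?E S n)) \<longlonglongrightarrow> 0"
    using SS(1) by (intro tendsto_outer_prob_UN[OF M _ E]) auto
  have "\<omega> \<in> (\<Union>S\<in>SS - {full}. ?E S n)"
    if "\<omega> \<in> space M" "S \<in> SS" "S \<noteq> full"
      "J full n \<omega> - pen full * kappa n \<ge> J S n \<omega> - pen S * kappa n" for \<omega> S n
  proof -
    have "J full n \<omega> - J S n \<omega> \<ge> (pen full - pen S) * kappa n"
      using that(4) by (simp add: algebra_simps)
    then have "norm (J full n \<omega>) \<ge> ?c S n \<or> norm (J S n \<omega>) \<ge> ?c S n"
      by (simp add: abs_if split: if_splits) linarith
    with that(1-3) show ?thesis by blast
  qed
  then show "eventually (\<lambda>n. {\<omega> \<in> space M. \<not> (\<forall>S\<in>SS. S \<noteq> full \<longrightarrow>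
            J full n \<omega> - pen full * kappa n < J S n \<omega> - pen S * kappa n)}
      \<subseteq> (\<Union>S\<in>SS - {full}. ?E S n)) sequentially"
    by (intro always_eventually allI subsetI) (auto simp: not_less)
qed

theorem theorem10:
  fixes M :: "'a measure"
    and Z :: "nat \<Rightarrow> nat \<Rightarrow> 'a \<Rightarrow> 'z::euclidean_space"
    and PZ :: "'z measure"
    and f :: "'z \<Rightarrow> real^'r \<Rightarrow> real^'m"
    and Df :: "'z \<Rightarrow> real^'r \<Rightarrow> real^'r^'m"
    and Theta :: "(real^'r) set" and theta0 :: "real^'r"
    and G :: "'m set" and tau :: "real^'m"
    and Omega :: "'m \<Rightarrow> 'm \<Rightarrow> real" and L :: "(real^'m) measure"
    and SS :: "'m set set"
    and Wt :: "'m set \<Rightarrow> nat \<Rightarrow> 'a \<Rightarrow> 'm \<Rightarrow> 'm \<Rightarrow> real"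
    and W :: "'m set \<Rightarrow> 'm \<Rightarrow> 'm \<Rightarrow> real"
    and thetah :: "'m set \<Rightarrow> nat \<Rightarrow> 'a \<Rightarrow> real^'r"
    and Omh :: "'m set \<Rightarrow> nat \<Rightarrow> 'a \<Rightarrow> 'm \<Rightarrow> 'm \<Rightarrow> real"
    and Omi :: "'m set \<Rightarrow> 'm \<Rightarrow> 'm \<Rightarrow> real"
    and hh :: "real \<Rightarrow> real" and kappa :: "nat \<Rightarrow> real"
  assumes M: "prob_space M"
    and PZ: "prob_space PZ" "sets PZ = sets borel"
    and Z_meas: "\<And>n i. i < n \<Longrightarrow> Z n i \<in> borel_measurable M"
    and f_meas: "\<And>\<theta>. (\<lambda>z. f z \<theta>) \<in> borel_measurable borel"
    and f_int: "\<And>\<theta>. integrable PZ (\<lambda>z. f z \<theta>)"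
    and f_sq_int: "\<And>i. integrable PZ (\<lambda>z. (f z theta0 $ i)\<^sup>2)"
    and Z_law: "\<And>i. conv_in_dist M (\<lambda>n. Z n i) PZ"
    and UI: "unif_integrable M (\<lambda>(n, i) \<omega>. f (Z n i \<omega>) theta0) {(n, i). i < n}"
    and mean: "\<And>n i. i < n \<Longrightarrow> (\<integral>\<omega>. f (Z n i \<omega>) theta0 \<partial>M) = (1 / sqrt (real n)) *\<^sub>R tau"
    and tau_G: "\<forall>j\<in>G. tau $ j = 0"
    and Theta: "compact Theta" "theta0 \<in> interior Theta"
    and Ef_cont: "continuous_on Theta (\<lambda>\<theta>. \<integral>z. f z \<theta> \<partial>PZ)"
    and ULLN: "\<forall>e>0. (\<lambda>n. outer_prob M
                 {\<omega> \<in> space M. \<exists>\<theta>\<in>Theta. norm (sample_mom Z f n \<omega> \<theta> - (\<integral>z. f z \<theta> \<partial>PZ)) > e}) \<longlonglongrightarrow> 0"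
    and diff: "\<exists>N. open N \<and> theta0 \<in> N \<and>
                 (\<forall>\<theta>\<in>N. integrable PZ (\<lambda>z. Df z \<theta>)) \<and>
                 (AE z in PZ. \<forall>\<theta>\<in>N. (f z has_derivative (\<lambda>d. Df z \<theta> *v d)) (at \<theta>)) \<and>
                 (\<forall>n i. i < n \<longrightarrow> (AE \<omega> in M. \<forall>\<theta>\<in>N.
                    (f (Z n i \<omega>) has_derivative (\<lambda>d. Df (Z n i \<omega>) \<theta> *v d)) (at \<theta>))) \<and>
                 (\<forall>e>0. (\<lambda>n. outer_prob M {\<omega> \<in> space M. \<exists>\<theta>\<in>N.
                    norm (sample_mom Z Df n \<omega> \<theta> - (\<integral>z. Df z \<theta> \<partial>PZ)) > e})
                    \<longlonglongrightarrow> 0)"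
    and CLT: "gaussian_vec L tau Omega" "conv_in_dist M (\<lambda>n \<omega>. sqrt (real n) *\<^sub>R sample_mom Z f n \<omega> theta0) L"
    and SS_full: "UNIV \<in> SS"
    and SS_card: "\<forall>S\<in>SS. card S > CARD('r)"
    and W_conv: "\<forall>S\<in>SS. \<forall>i\<in>S. \<forall>j\<in>S. conv_in_prob M (\<lambda>n \<omega>. Wt S n \<omega> i j) (W S i j)"
    and W_pd: "\<forall>S\<in>SS. pos_def_on S (W S)"
    and ident: "\<forall>S\<in>SS. \<forall>\<theta>\<in>Theta.
                  (\<forall>i\<in>S. (\<Sum>j\<in>S. W S i j * (\<integral>z. f z \<theta> \<partial>PZ) $ j) = 0) \<longleftrightarrow> \<theta> = theta0"
    and FWF: "\<forall>S\<in>SS. invertible (\<chi> k l. \<Sum>i\<in>S. \<Sum>j\<in>S. (\<integral>z. Df z theta0 \<partial>PZ) $ i $ k * W S i j * (\<integral>z. Df z theta0 \<partial>PZ) $ j $ l)"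
    and argmin: "\<forall>S\<in>SS. \<forall>n. \<forall>\<omega>\<in>space M. thetah S n \<omega> \<in> Theta \<and>
                   (\<forall>\<theta>\<in>Theta. quad_on S (sample_mom Z f n \<omega> (thetah S n \<omega>)) (Wt S n \<omega>)
                                      \<le> quad_on S (sample_mom Z f n \<omega> \<theta>) (Wt S n \<omega>))"
    and Om_pd: "\<forall>S\<in>SS. pos_def_on S (cov_mat PZ (\<lambda>z. f z theta0))"
    and Omi_inv: "\<forall>S\<in>SS. \<forall>i\<in>S. \<forall>k\<in>S. (\<Sum>j\<in>S. cov_mat PZ (\<lambda>z. f z theta0) i j * Omi S j k) = (if i = k then 1 else 0)"
    and Omh_conv: "\<forall>S\<in>SS. \<forall>i\<in>S. \<forall>j\<in>S. conv_in_prob M (\<lambda>n \<omega>. Omh S n \<omega> i j) (Omi S i j)"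
    and hh: "strict_mono hh"
    and kappa_inf: "filterlim kappa at_top sequentially"
    and kappa_o: "(\<lambda>n. kappa n / real n) \<longlonglongrightarrow> 0"
  shows "(\<lambda>n. outer_prob M {\<omega> \<in> space M.
            \<not> (\<forall>S\<in>SS. S \<noteq> UNIV \<longrightarrow> real n * quad_on UNIV (sample_mom Z f n \<omega> (thetah UNIV n \<omega>)) (Omh UNIV n \<omega>)
                  - hh (real (card (UNIV::'m set))) * kappa n
               < real n * quad_on S (sample_mom Z f n \<omega> (thetah S n \<omega>)) (Omh S n \<omega>)
                  - hh (real (card S)) * kappa n)}) \<longlonglongrightarrow> 0"
proof -
  have fin: "finite_measure M" using M by (simp add: prob_space_def)
  have "bounded_in_prob M (\<lambda>n \<omega>. sqrt (real n) *\<^sub>R sample_mom Z f n \<omega> theta0)"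
  proof (rule conv_in_dist_bounded_in_prob[OF M _ _ _ CLT(2)])
    show "prob_space L" "sets L = sets borel" using CLT(1) unfolding gaussian_vec_def by auto
    show "(\<lambda>\<omega>. sqrt (real n) *\<^sub>R sample_mom Z f n \<omega> theta0) \<in> borel_measurable M" for n
      unfolding sample_mom_def
      by (intro borel_measurable_scaleR borel_measurable_sum borel_measurable_const
          measurable_compose[OF Z_meas f_meas]) auto
  qed
  then have J: "bounded_in_prob M (\<lambda>n \<omega>. real n * quad_on S (sample_mom Z f n \<omega> (thetah S n \<omega>)) (Omh S n \<omega>))"
    if "S \<in> SS" for S
    using that argmin W_pd W_conv Omh_conv interior_subset[of Theta] Theta(2)
    by (intro bounded_in_prob_scaled_quad_on_minimizer[OF M,
        where u = "\<lambda>n \<omega>. sample_mom Z f n \<omega> theta0" and Wt = "Wt S" and W = "W S" and Oi = "Omi S"]) auto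
  have pen: "hh (real (card S)) < hh (real (card (UNIV :: 'm set)))" if "S \<noteq> UNIV" for S :: "'m set"
    using that hh psubset_card_mono[of UNIV S] by (auto simp: strict_mono_less)
  show ?thesis
    by (rule penalized_selection_consistent[OF fin _ SS_full,
          where J = "\<lambda>S n \<omega>. real n * quad_on S (sample_mom Z f n \<omega> (thetah S n \<omega>)) (Omh S n \<omega>)"
            and pen = "\<lambda>S. hh (real (card S))"])
       (use J pen kappa_inf in auto)
qed

end
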